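(* Let $A \in \mathbb{R}^{m\times n}$ satisfy the strong null space property (sNSP) of order $s$ (defined in the context). Let $\mathbf{b} \in \mathbb{R}^m$ with $\mathbf{b} \neq \mathbf{0}$, and let $\mathbf{x} \in \mathbb{R}^n$ be an $s$-sparse vector (i.e. $\|\mathbf{x}\|_0 \le s$) with $A\mathbf{x} = \mathbf{b}$. Then $\mathbf{x}$ is a local minimizer of $\|\cdot\|_1/\|\cdot\|_2$ on the affine set $\{\mathbf{z} : A\mathbf{z} = \mathbf{b}\}$: there exists $t^* > 0$ such that for every $\mathbf{v} \in \ker(A)$ with $0 < \|\mathbf{v}\|_2 \le t^*$, $$\frac{\|\mathbf{x}\|_1}{\|\mathbf{x}\|_2} \le \frac{\|\mathbf{x}+\mathbf{v}\|_1}{\|\mathbf{x}+\mathbf{v}\|_2}.$$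
   Context: Notation: $[n] = \{1,\dots,n\}$. For $S \subset [n]$, $\bar S = [n]\setminus S$. For $\mathbf{x} \in \mathbb{R}^n$, $\mathbf{x}_S \in \mathbb{R}^n$ has entries $(\mathbf{x}_S)_i = x_i$ if $i \in S$ and $0$ otherwise. $\|\mathbf{x}\|_0$ is the number of nonzero entries of $\mathbf{x}$. $\ker(A) = \{\mathbf{x} : A\mathbf{x} = \mathbf{0}\}$. Definition (sNSP): $A \in \mathbb{R}^{m\times n}$ satisfies the strong null space property of order $s$ if $(s+1)\|\mathbf{v}_S\|_1 \le \|\mathbf{v}_{\bar S}\|_1$ for all $\mathbf{v} \in \ker(A)\setminus\{\mathbf{0}\}$ and all $S \subset [n]$ with $|S| \le s$. *)

theory Defs
  imports "HOL-Analysis.Analysis"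
begin

text \<open>Vectors in R^n are real^'n (finite index type 'n); matrices A in R^(m x n) are real^'n^'m.
  The Euclidean (l2) norm of real^'n is the library norm.\<close>

definition l1norm :: "real ^ 'n \<Rightarrow> real" where
  "l1norm x = (\<Sum>i\<in>UNIV. \<bar>x $ i\<bar>)"

definition l0norm :: "real ^ 'n \<Rightarrow> nat" where
  "l0norm x = card {i. x $ i \<noteq> 0}"

definition restr :: "'n set \<Rightarrow> real ^ 'n \<Rightarrow> real ^ 'n" where
  "restr S x = (\<chi> i. if i \<in> S then x $ i else 0)"

definition sNSP :: "real ^ 'n ^ 'm \<Rightarrow> nat \<Rightarrow> bool" where
  "sNSP A s \<longleftrightarrow> (\<forall>v. A *v v = 0 \<and> v \<noteq> 0 \<longrightarrow>
     (\<forall>S. card S \<le> s \<longrightarrow>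
        (real s + 1) * l1norm (restr S v) \<le> l1norm (restr (- S) v)))"

end

theory Submission
  imports Defs
begin

text \<open>Write \<open>a = \<parallel>x\<parallel>\<^sub>1\<close>, \<open>c = \<parallel>x\<parallel>\<^sub>2\<close>, \<open>S\<close> for the support of \<open>x\<close>, and for
  \<open>v \<in> ker A\<close> put \<open>p = \<parallel>v\<^sub>S\<parallel>\<^sub>1\<close>, \<open>q = \<parallel>v\<^sub>S\<^sub>\<bar>\<parallel>\<^sub>1\<close>, so that \<open>(s+1) p \<le> q\<close> by the sNSP.
  Then \<open>\<parallel>x+v\<parallel>\<^sub>1 \<ge> a + \<sigma> + q\<close> with \<open>\<sigma> = \<Sum> sgn(x\<^sub>i) v\<^sub>i\<close>, while
  \<open>\<parallel>x+v\<parallel>\<^sub>2\<^sup>2 = c\<^sup>2 + 2\<langle>x,v\<rangle> + \<parallel>v\<parallel>\<^sub>2\<^sup>2\<close>. Cauchy-Schwarz on the support gives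
  \<open>a |x\<^sub>i| \<le> s c\<^sup>2\<close>, hence \<open>c\<^sup>2 \<sigma> - a\<langle>x,v\<rangle> \<ge> -s c\<^sup>2 p\<close>: to first order the ratio
  \<open>\<parallel>\<cdot>\<parallel>\<^sub>1/\<parallel>\<cdot>\<parallel>\<^sub>2\<close> grows by a multiple of \<open>q - s p \<ge> q/(s+1)\<close>. For
  \<open>\<parallel>v\<parallel>\<^sub>2 \<le> c\<^sup>2/(a(s+1))\<close> this margin also absorbs the quadratic term, since
  \<open>\<parallel>v\<parallel>\<^sub>2\<^sup>2 \<le> \<parallel>v\<parallel>\<^sub>2 (p + q) \<le> 2 \<parallel>v\<parallel>\<^sub>2 q\<close>.\<close>

lemma l1norm_restr: "l1norm (restr S v) = (\<Sum>i\<in>S. \<bar>v $ i\<bar>)"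
  unfolding l1norm_def restr_def by (simp add: if_distrib sum.If_cases)

lemma l1norm_restr_add_restr_Compl:
  "l1norm v = l1norm (restr S v) + l1norm (restr (- S) v)"
  unfolding l1norm_restr unfolding l1norm_def
  using sum.Int_Diff[of UNIV _ S] by (simp add: Compl_eq_Diff_UNIV)

lemma l0norm_eq_0_iff: "l0norm x = 0 \<longleftrightarrow> x = 0"
  unfolding l0norm_def by (auto simp: vec_eq_iff)

lemma norm_le_l1norm: "norm x \<le> l1norm x"
  unfolding l1norm_def by (rule norm_le_l1_cart)

lemma l1norm_power2_le_l0norm: "l1norm x ^ 2 \<le> real (l0norm x) * norm x ^ 2"
proof -
  let ?S = "{i. x $ i \<noteq> 0}"
  have "l1norm x = (\<Sum>i\<in>?S. \<bar>x $ i\<bar>)"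
    unfolding l1norm_def by (rule sum.mono_neutral_right) auto
  moreover have "(\<Sum>i\<in>?S. \<bar>x $ i\<bar> ^ 2) = norm x ^ 2"
    unfolding power2_norm_eq_inner inner_vec_def inner_real_def
    by (rule sum.mono_neutral_cong_left) (auto simp: power2_eq_square)
  ultimately show ?thesis
    using sum_squared_le_sum_of_squares[of "\<lambda>i. \<bar>x $ i\<bar>" ?S]
    unfolding l0norm_def by (simp add: mult.commute)
qed

lemma l1norm_mult_abs_component_le:
  assumes "l0norm x \<le> s"
  shows "l1norm x * \<bar>x $ i\<bar> \<le> real s * norm x ^ 2"
proof (cases "s = 0")
  case True
  then have "x = 0"
    using assms l0norm_eq_0_iff[of x] by simp
  then show ?thesis by (simp add: l1norm_def)
next
  case False
  let ?k = "real s * norm x ^ 2"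
  have "l1norm x ^ 2 \<le> ?k"
    using l1norm_power2_le_l0norm[of x] assms
    by (meson mult_right_mono of_nat_le_iff order_trans zero_le_power2)
  moreover have "\<bar>x $ i\<bar> ^ 2 \<le> norm x ^ 2"
    using power_mono[OF component_le_norm_cart[of x i], of 2] by simp
  ultimately have "(l1norm x * \<bar>x $ i\<bar>) ^ 2 \<le> ?k * norm x ^ 2"
    unfolding power_mult_distrib by (rule mult_mono) auto
  also have "\<dots> \<le> ?k * ?k"
    using False mult_right_mono[of 1 "real s" "norm x ^ 2"] by (intro mult_left_mono) auto
  finally have "(l1norm x * \<bar>x $ i\<bar>) ^ 2 \<le> ?k ^ 2"
    by (simp only: power2_eq_square)
  then show ?thesis
    by (rule power2_le_imp_le) simp
qed

lemma l1norm_add_ge: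
  "l1norm x + (\<Sum>i\<in>UNIV. sgn (x $ i) * v $ i) + l1norm (restr {i. x $ i = 0} v)
     \<le> l1norm (x + v)"
  unfolding l1norm_def restr_def sum.distrib[symmetric]
  by (rule sum_mono) (auto simp: abs_if sgn_if)

lemma sum_sgn_mult_ge: "- l1norm (restr {i. x $ i \<noteq> 0} v) \<le> (\<Sum>i\<in>UNIV. sgn (x $ i) * v $ i)"
  unfolding l1norm_def restr_def sum_negf[symmetric]
  by (rule sum_mono) (auto simp: abs_if sgn_if)

lemma abs_mult_sgn_diff_le:
  fixes a c k y :: real
  assumes "0 \<le> c" "c \<le> k" "0 \<le> a * \<bar>y\<bar>" "a * \<bar>y\<bar> \<le> k"
  shows "\<bar>c * sgn y - a * y\<bar> \<le> k"
  using assms by (cases y "0::real" rule: linorder_cases) (auto simp: abs_le_iff)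

text \<open>The right-hand side is \<open>c\<^sup>3\<close> times the directional derivative of \<open>\<parallel>\<cdot>\<parallel>\<^sub>1/\<parallel>\<cdot>\<parallel>\<^sub>2\<close> at
  \<open>x\<close> along \<open>v\<^sub>S\<close>; each of its coefficients \<open>c\<^sup>2 sgn x\<^sub>i - a x\<^sub>i\<close> is a difference of two
  numbers of the same sign in \<open>[0, s c\<^sup>2]\<close>.\<close>

lemma l1_l2_ratio_derivative_support_ge:
  assumes "l0norm x \<le> s"
  shows "- (real s * norm x ^ 2) * l1norm (restr {i. x $ i \<noteq> 0} v)
           \<le> norm x ^ 2 * (\<Sum>i\<in>UNIV. sgn (x $ i) * v $ i) - l1norm x * (x \<bullet> v)"
proof -
  let ?k = "real s * norm x ^ 2"
  have coeff: "\<bar>norm x ^ 2 * sgn (x $ i) - l1norm x * x $ i\<bar> \<le> ?k" if "x $ i \<noteq> 0" for i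
  proof -
    have "l1norm x * \<bar>x $ i\<bar> \<le> ?k"
      using assms by (rule l1norm_mult_abs_component_le)
    moreover have "norm x ^ 2 \<le> ?k"
    proof -
      have "1 \<le> l0norm x"
        using that l0norm_eq_0_iff[of x] by (auto simp: Suc_le_eq)
      with assms show ?thesis
        using mult_right_mono[of 1 "real s" "norm x ^ 2"] by simp
    qed
    moreover have "0 \<le> l1norm x * \<bar>x $ i\<bar>"
      unfolding l1norm_def by (simp add: sum_nonneg)
    ultimately show ?thesis
      by (intro abs_mult_sgn_diff_le) auto
  qed
  have "- ?k * l1norm (restr {i. x $ i \<noteq> 0} v)
          = (\<Sum>i\<in>UNIV. - ?k * (if x $ i \<noteq> 0 then \<bar>v $ i\<bar> else 0))"
    unfolding l1norm_def restr_def sum_distrib_left by (simp add: if_distrib)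
  also have "\<dots> \<le> (\<Sum>i\<in>UNIV. (norm x ^ 2 * sgn (x $ i) - l1norm x * x $ i) * v $ i)"
  proof (rule sum_mono)
    fix i
    have "\<bar>(norm x ^ 2 * sgn (x $ i) - l1norm x * x $ i) * v $ i\<bar> \<le> ?k * \<bar>v $ i\<bar>"
      if "x $ i \<noteq> 0"
      unfolding abs_mult using coeff[OF that] by (rule mult_right_mono) simp
    then show "- ?k * (if x $ i \<noteq> 0 then \<bar>v $ i\<bar> else 0)
                 \<le> (norm x ^ 2 * sgn (x $ i) - l1norm x * x $ i) * v $ i"
      by (cases "x $ i = 0") (auto simp: abs_le_iff)
  qed
  also have "\<dots> = norm x ^ 2 * (\<Sum>i\<in>UNIV. sgn (x $ i) * v $ i) - l1norm x * (x \<bullet> v)"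
    unfolding inner_vec_def sum_distrib_left sum_subtractf[symmetric]
    by (rule sum.cong) (auto simp: algebra_simps)
  finally show ?thesis .
qed

lemma l1_l2_ratio_le_of_gain:
  fixes a c g L N :: real
  assumes "0 < a" "0 < c" "0 < N" "0 \<le> g" "a + g \<le> L"
    and "a * (N ^ 2 - c ^ 2) \<le> 2 * c ^ 2 * g"
  shows "a / c \<le> L / N"
proof -
  have "(a * N) ^ 2 = a ^ 2 * c ^ 2 + a * (a * (N ^ 2 - c ^ 2))"
    by (simp add: power2_eq_square algebra_simps)
  also have "\<dots> \<le> a ^ 2 * c ^ 2 + a * (2 * c ^ 2 * g)"
    using assms(1,6) by simp
  also have "\<dots> \<le> (c * (a + g)) ^ 2"
    using zero_le_power2[of "c * g"] by (simp add: power2_eq_square algebra_simps)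
  also have "\<dots> \<le> (c * L) ^ 2"
  proof (rule power_mono)
    show "c * (a + g) \<le> c * L"
      using assms(2,5) by simp
  qed (use assms(1,2,4) in simp)
  finally have "a * N \<le> c * L"
    by (rule power2_le_imp_le) (use assms(1,2,4,5) in simp)
  then show ?thesis
    using assms(2,3) by (simp add: divide_le_eq le_divide_eq mult.commute)
qed

lemma l1_l2_radius_le_half_norm:
  assumes "x \<noteq> 0" "l0norm x \<le> s"
  shows "norm x ^ 2 / (l1norm x * (real s + 1)) \<le> norm x / 2"
proof -
  have "1 \<le> s"
    using assms l0norm_eq_0_iff[of x] by simp
  have c: "0 < norm x"
    using assms(1) by simp
  then have a: "0 < l1norm x"
    using norm_le_l1norm[of x] by linarith
  have "norm x ^ 2 / (l1norm x * (real s + 1)) \<le> norm x ^ 2 / (2 * l1norm x)"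
    by (rule divide_left_mono) (use a \<open>1 \<le> s\<close> in auto)
  also have "\<dots> \<le> norm x / 2"
  proof -
    have "c' ^ 2 / (2 * a') \<le> c' / 2" if "0 < c'" "c' \<le> a'" for a' c' :: real
      using that by (simp add: divide_le_eq power2_eq_square mult_left_mono)
    then show ?thesis
      using norm_le_l1norm[of x] c by blast
  qed
  finally show ?thesis .
qed

lemma mult_square_le_nsp_margin:
  fixes a c p q w :: real and s :: nat
  assumes "0 < a" "(real s + 1) * p \<le> q" "0 \<le> p" "0 \<le> w" "w \<le> p + q"
    and "w \<le> c ^ 2 / (a * (real s + 1))"
  shows "a * w ^ 2 \<le> 2 * c ^ 2 * (q - real s * p)"
proof -
  have "p \<le> (real s + 1) * p"
    using assms(3) by (simp add: distrib_right)
  with assms(2) have "p \<le> q" by linarith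
  have "w ^ 2 \<le> c ^ 2 / (a * (real s + 1)) * (p + q)"
    unfolding power2_eq_square[of w] by (rule mult_mono) (use assms in auto)
  also have "\<dots> \<le> c ^ 2 / (a * (real s + 1)) * (2 * q)"
    by (rule mult_left_mono) (use \<open>p \<le> q\<close> assms(1) in auto)
  finally have "a * w ^ 2 \<le> a * (c ^ 2 / (a * (real s + 1)) * (2 * q))"
    by (rule mult_left_mono) (use assms(1) in simp)
  also have "\<dots> = 2 * c ^ 2 * (q / (real s + 1))"
    using assms(1) by simp
  also have "\<dots> \<le> 2 * c ^ 2 * (q - real s * p)"
  proof (rule mult_left_mono)
    have "real s * ((real s + 1) * p) \<le> real s * q"
      using assms(2) by (rule mult_left_mono) simp
    then have "q \<le> (real s + 1) * (q - real s * p)"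
      by (simp add: algebra_simps)
    then show "q / (real s + 1) \<le> q - real s * p"
      by (simp add: divide_le_eq mult.commute)
  qed simp
  finally show ?thesis .
qed

lemma l1_l2_ratio_le_add:
  fixes x v :: "real ^ 'n"
  assumes "x \<noteq> 0" and sparse: "l0norm x \<le> s"
    and nsp: "(real s + 1) * l1norm (restr {i. x $ i \<noteq> 0} v) \<le> l1norm (restr {i. x $ i = 0} v)"
    and small: "norm v \<le> norm x ^ 2 / (l1norm x * (real s + 1))"
  shows "l1norm x / norm x \<le> l1norm (x + v) / norm (x + v)"
proof -
  define a c p q \<sigma> where "a = l1norm x" and "c = norm x"
    and "p = l1norm (restr {i. x $ i \<noteq> 0} v)" and "q = l1norm (restr {i. x $ i = 0} v)"
    and "\<sigma> = (\<Sum>i\<in>UNIV. sgn (x $ i) * v $ i)"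
  have c: "0 < c" using assms(1) by (simp add: c_def)
  then have a: "0 < a" using norm_le_l1norm[of x] unfolding a_def c_def by linarith
  have nsp': "(real s + 1) * p \<le> q"
    using nsp unfolding p_def q_def .
  have small': "norm v \<le> c ^ 2 / (a * (real s + 1))"
    using small unfolding a_def c_def .
  have p: "0 \<le> p" unfolding p_def l1norm_def by (simp add: sum_nonneg)
  then have "p \<le> (real s + 1) * p" by (simp add: distrib_right)
  with nsp' have "p \<le> q" by linarith
  have "norm v \<le> l1norm v"
    by (rule norm_le_l1norm)
  also have "\<dots> = p + q"
    unfolding p_def q_def l1norm_restr_add_restr_Compl[of v "{i. x $ i \<noteq> 0}"]
    by (simp add: Collect_neg_eq[symmetric])
  finally have "norm v \<le> p + q" .
  have "x + v \<noteq> 0"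
  proof
    assume "x + v = 0"
    then have "norm v = c"
      unfolding c_def by (metis add_eq_0_iff norm_minus_cancel)
    with small l1_l2_radius_le_half_norm[OF assms(1) sparse] c show False
      unfolding c_def by simp
  qed
  then have N: "0 < norm (x + v)" by simp
  have gain: "a + (\<sigma> + q) \<le> l1norm (x + v)"
    using l1norm_add_ge[of x v] unfolding a_def \<sigma>_def q_def by simp
  have "0 \<le> \<sigma> + q"
    using sum_sgn_mult_ge[of x v] \<open>p \<le> q\<close> unfolding \<sigma>_def p_def by simp
  have "a * norm v ^ 2 \<le> 2 * c ^ 2 * (q - real s * p)"
    using mult_square_le_nsp_margin[OF a nsp' p _ \<open>norm v \<le> p + q\<close> small'] by simp
  moreover have "- (real s * c ^ 2) * p \<le> c ^ 2 * \<sigma> - a * (x \<bullet> v)"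
    using l1_l2_ratio_derivative_support_ge[OF sparse] unfolding a_def c_def p_def \<sigma>_def .
  moreover have "norm (x + v) ^ 2 - c ^ 2 = 2 * (x \<bullet> v) + norm v ^ 2"
    unfolding c_def power2_norm_eq_inner by (simp add: inner_add inner_commute)
  ultimately have "a * (norm (x + v) ^ 2 - c ^ 2) \<le> 2 * c ^ 2 * (\<sigma> + q)"
    by (simp add: algebra_simps)
  from l1_l2_ratio_le_of_gain[OF a c N \<open>0 \<le> \<sigma> + q\<close> gain this]
  show ?thesis unfolding a_def c_def .
qed

theorem theorem2p1:
  fixes A :: "real ^ 'n ^ 'm" and b :: "real ^ 'm" and x :: "real ^ 'n" and s :: nat
  assumes "sNSP A s" and "b \<noteq> 0" and "l0norm x \<le> s" and "A *v x = b"
  shows "\<exists>t>0. \<forall>v. A *v v = 0 \<and> 0 < norm v \<and> norm v \<le> t \<longrightarrow>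
           l1norm x / norm x \<le> l1norm (x + v) / norm (x + v)"
proof -
  have "x \<noteq> 0" using assms(2,4) by auto
  then have "0 < l1norm x"
    using norm_le_l1norm[of x] by (metis less_le_trans zero_less_norm_iff)
  define t where "t = norm x ^ 2 / (l1norm x * (real s + 1))"
  show ?thesis
  proof (intro exI[of _ t] conjI allI impI)
    show "0 < t"
      unfolding t_def using \<open>x \<noteq> 0\<close> \<open>0 < l1norm x\<close> by simp
    fix v
    assume v: "A *v v = 0 \<and> 0 < norm v \<and> norm v \<le> t"
    then have "(real s + 1) * l1norm (restr {i. x $ i \<noteq> 0} v)
                 \<le> l1norm (restr (- {i. x $ i \<noteq> 0}) v)"
      using assms(1,3) unfolding sNSP_def l0norm_def by auto
    moreover have "- {i. x $ i \<noteq> 0} = {i. x $ i = 0}" by auto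
    ultimately show "l1norm x / norm x \<le> l1norm (x + v) / norm (x + v)"
      using l1_l2_ratio_le_add[OF \<open>x \<noteq> 0\<close> assms(3)] v unfolding t_def by simp
  qed
qed

end
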